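(* Let $p,q,r\in\mathbb{Q}$ with $r\neq0$, and suppose $t^3-pt^2-qt-r$ has three distinct roots $\alpha_1,\alpha_2,\alpha_3$ with $\alpha_1\neq p$. Let $x,y,z$ be integers and $$M=\begin{pmatrix} x & rz & ry+prz\\ y & x+qz & qy+(pq+r)z\\ z & y+pz & x+py+(p^2+q)z\end{pmatrix}.$$ Suppose $|x+y\alpha_1+z\alpha_1^2|>|x+y\alpha_j+z\alpha_j^2|$ for $j=2,3$. Then for all $h,k\in\{1,2,3\}$, $$\lim_{n\to\infty}\frac{M^n_{2,2}}{M^n_{h,k}}=\bar M_{h,k},\qquad \bar M=\begin{pmatrix}\frac{\alpha_1^2(\alpha_1-p)}{r} & \frac{\alpha_1(\alpha_1-p)}{r} & \frac{\alpha_1-p}{r}\\ \alpha_1 & 1 & \frac{1}{\alpha_1}\\ \alpha_1(\alpha_1-p) & \alpha_1-p & \frac{\alpha_1-p}{\alpha_1}\end{pmatrix},$$ and $$\lim_{n\to\infty}\frac{M^n_{3,3}}{M^n_{h,k}}=\tilde M_{h,k},\qquad \tilde M=\begin{pmatrix}\frac{\alpha_1^3}{r} & \frac{\alpha_1^2}{r} & \frac{\alpha_1}{r}\\ \frac{\alpha_1^2}{\alpha_1-p} & \frac{\alpha_1}{\alpha_1-p} & \frac{1}{\alpha_1-p}\\ \alpha_1^2 & \alpha_1 & 1\end{pmatrix}.$$ (Equivalently, $\bar M_{1,1}=-\alpha_1(\alpha_2+\alpha_3)/(\alpha_2\alpha_3)$, $\tilde M_{1,1}=\alpha_1^2/(\alpha_2\alpha_3)$,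 etc., using $\alpha_1-p=-(\alpha_2+\alpha_3)$ and $r=\alpha_1\alpha_2\alpha_3$.)
   Context: $M^n_{a,b}$ denotes the $(a,b)$-entry of the $n$-th power of $M$. The matrix $M$ equals $xI+yA+zA^2$, where $A=\begin{pmatrix}0&0&r\\1&0&q\\0&1&p\end{pmatrix}$ is the companion matrix of $t^3-pt^2-qt-r$. *)

theory Defs
  imports Complex_Main "Jordan_Normal_Form.Matrix"
begin

text \<open>The matrix M (entries over the complex numbers, 1-based entry (h,k) is stored at (h-1,k-1)).\<close>
definition Mmat :: "rat \<Rightarrow> rat \<Rightarrow> rat \<Rightarrow> int \<Rightarrow> int \<Rightarrow> int \<Rightarrow> complex mat" where
  "Mmat p q r x y z = (let P = of_rat p; Q = of_rat q; R = of_rat r;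
      X = of_int x; Y = of_int y; Z = of_int z in
     mat_of_rows_list 3
      [[X, R*Z, R*Y + P*R*Z],
       [Y, X + Q*Z, Q*Y + (P*Q + R)*Z],
       [Z, Y + P*Z, X + P*Y + (P^2 + Q)*Z]])"

definition Mbar :: "rat \<Rightarrow> rat \<Rightarrow> complex \<Rightarrow> complex mat" where
  "Mbar p r a = (let P = of_rat p; R = of_rat r in
     mat_of_rows_list 3
      [[a^2*(a - P)/R, a*(a - P)/R, (a - P)/R],
       [a, 1, 1/a],
       [a*(a - P), a - P, (a - P)/a]])"

definition Mtilde :: "rat \<Rightarrow> rat \<Rightarrow> complex \<Rightarrow> complex mat" where
  "Mtilde p r a = (let P = of_rat p; R = of_rat r in
     mat_of_rows_list 3
      [[a^3/R, a^2/R, a/R],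
       [a^2/(a - P), a/(a - P), 1/(a - P)],
       [a^2, a, 1]])"

end

theory Submission
  imports Defs
begin

text \<open>
  If \<open>a\<close> is a root of \<open>f(t) = t\<^sup>3 - P t\<^sup>2 - Q t - R\<close>, then \<open>(1, a, a\<^sup>2)\<close> is a left eigenvector
  and \<open>(R/a, a - P, 1)\<^sup>T\<close> a right eigenvector of \<open>M = X I + Y A + Z A\<^sup>2\<close> for the eigenvalue
  \<open>X + Y a + Z a\<^sup>2\<close>. For three distinct roots these give the spectral decomposition
  \<open>M\<^sup>n\<^sub>h\<^sub>k = \<Sum>\<^sub>i (X + Y a\<^sub>i + Z a\<^sub>i\<^sup>2)\<^sup>n v\<^sub>h(a\<^sub>i) a\<^sub>i\<^sup>k / f'(a\<^sub>i)\<close> (indices from 0), so the dominant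
  eigenvalue determines every limit of ratios of entries of \<open>M\<^sup>n\<close>.
\<close>

definition poly_companion_mat ::
    "complex \<Rightarrow> complex \<Rightarrow> complex \<Rightarrow> complex \<Rightarrow> complex \<Rightarrow> complex \<Rightarrow> complex mat" where
  "poly_companion_mat P Q R X Y Z = mat_of_rows_list 3
      [[X, R*Z, R*Y + P*R*Z],
       [Y, X + Q*Z, Q*Y + (P*Q + R)*Z],
       [Z, Y + P*Z, X + P*Y + (P^2 + Q)*Z]]"

definition eigenvalue_at :: "complex \<Rightarrow> complex \<Rightarrow> complex \<Rightarrow> complex \<Rightarrow> complex" where
  "eigenvalue_at X Y Z a = X + Y*a + Z*a^2"

definition right_eigenvector :: "complex \<Rightarrow> complex \<Rightarrow> complex \<Rightarrow> nat \<Rightarrow> complex" where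
  "right_eigenvector P R a h = (if h = 0 then R/a else if h = 1 then a - P else 1)"

definition cubic_deriv :: "complex \<Rightarrow> complex \<Rightarrow> complex \<Rightarrow> complex" where
  "cubic_deriv P Q a = 3*a^2 - 2*P*a - Q"

definition spectral_term ::
    "complex \<Rightarrow> complex \<Rightarrow> complex \<Rightarrow> complex \<Rightarrow> complex \<Rightarrow> complex \<Rightarrow> complex \<Rightarrow> nat \<Rightarrow> nat \<Rightarrow> nat \<Rightarrow> complex"
  where "spectral_term P Q R X Y Z a n h k =
    eigenvalue_at X Y Z a ^ n * (right_eigenvector P R a h * a^k / cubic_deriv P Q a)"

lemma nat_less_3_cases: "(k::nat) < 3 \<Longrightarrow> k = 0 \<or> k = 1 \<or> k = 2"
  by auto

lemma sum_lessThan_3: "(\<Sum>l<3. g l) = g 0 + g 1 + g 2"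
  for g :: "nat \<Rightarrow> 'a :: comm_monoid_add"
  by (simp add: numeral_3_eq_3 eval_nat_numeral)

lemma poly_companion_mat_dims [simp]:
  "dim_row (poly_companion_mat P Q R X Y Z) = 3"
  "dim_col (poly_companion_mat P Q R X Y Z) = 3"
  by (auto simp: poly_companion_mat_def mat_of_rows_list_def)

lemma poly_companion_mat_index:
  assumes "i < 3" "j < 3"
  shows "poly_companion_mat P Q R X Y Z $$ (i,j) =
    [[X, R*Z, R*Y + P*R*Z],
     [Y, X + Q*Z, Q*Y + (P*Q + R)*Z],
     [Z, Y + P*Z, X + P*Y + (P^2 + Q)*Z]] ! i ! j"
  using assms by (auto simp: poly_companion_mat_def mat_of_rows_list_def)

lemma cubic_vieta:
  fixes a1 a2 a3 P Q R :: "'a :: field"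
  assumes f1: "a1^3 - P*a1^2 - Q*a1 - R = 0"
    and f2: "a2^3 - P*a2^2 - Q*a2 - R = 0"
    and f3: "a3^3 - P*a3^2 - Q*a3 - R = 0"
    and distinct: "a1 \<noteq> a2" "a1 \<noteq> a3" "a2 \<noteq> a3"
  shows "P = a1 + a2 + a3" "Q = -(a1*a2 + a1*a3 + a2*a3)" "R = a1*a2*a3"
proof -
  have "(a1^3 - P*a1^2 - Q*a1 - R) - (a2^3 - P*a2^2 - Q*a2 - R)
      = (a1 - a2) * (a1^2 + a1*a2 + a2^2 - P*(a1 + a2) - Q)"
    by (simp add: algebra_simps power2_eq_square power3_eq_cube)
  with f1 f2 distinct have g12: "a1^2 + a1*a2 + a2^2 - P*(a1 + a2) - Q = 0"
    by simp
  have "(a1^3 - P*a1^2 - Q*a1 - R) - (a3^3 - P*a3^2 - Q*a3 - R)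
      = (a1 - a3) * (a1^2 + a1*a3 + a3^2 - P*(a1 + a3) - Q)"
    by (simp add: algebra_simps power2_eq_square power3_eq_cube)
  with f1 f3 distinct have g13: "a1^2 + a1*a3 + a3^2 - P*(a1 + a3) - Q = 0"
    by simp
  have "(a1^2 + a1*a2 + a2^2 - P*(a1 + a2) - Q) - (a1^2 + a1*a3 + a3^2 - P*(a1 + a3) - Q)
      = (a2 - a3) * (a1 + a2 + a3 - P)"
    by (simp add: algebra_simps power2_eq_square)
  with g12 g13 distinct show P: "P = a1 + a2 + a3"
    by simp
  from g12 P show Q: "Q = -(a1*a2 + a1*a3 + a2*a3)"
    by (simp add: algebra_simps power2_eq_square)
  from f1 P Q show "R = a1*a2*a3"
    by (simp add: algebra_simps power2_eq_square power3_eq_cube)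
qed

lemma left_eigenvector_poly_companion_mat:
  assumes root: "a^3 - P*a^2 - Q*a - R = 0" and k: "k < 3"
  shows "(\<Sum>l<3. a^l * poly_companion_mat P Q R X Y Z $$ (l,k)) = eigenvalue_at X Y Z a * a^k"
proof -
  let ?f = "a^3 - P*a^2 - Q*a - R"
  let ?d = "\<lambda>k. (\<Sum>l<3. a^l * poly_companion_mat P Q R X Y Z $$ (l,k)) - eigenvalue_at X Y Z a * a^k"
  have "?d 0 = 0" "?d 1 = -Z * ?f" "?d 2 = -(Y + Z*(a + P)) * ?f"
    by (simp_all add: sum_lessThan_3 poly_companion_mat_index eigenvalue_at_def
                      power2_eq_square power3_eq_cube algebra_simps)
  with root nat_less_3_cases[OF k] show ?thesis
    by (auto simp del: power_0 power_one_right)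
qed

text \<open>The case \<open>n = 0\<close> of the spectral decomposition: the dual bases of eigenvectors
  resolve the identity matrix.\<close>

lemma spectral_terms_resolve_identity:
  fixes a1 a2 a3 :: complex
  assumes distinct: "a1 \<noteq> a2" "a1 \<noteq> a3" "a2 \<noteq> a3"
    and nonzero: "a1 \<noteq> 0" "a2 \<noteq> 0" "a3 \<noteq> 0"
    and h: "h < 3" and k: "k < 3"
  defines "P \<equiv> a1 + a2 + a3" and "Q \<equiv> -(a1*a2 + a1*a3 + a2*a3)" and "R \<equiv> a1*a2*a3"
  shows "spectral_term P Q R X Y Z a1 0 h k + spectral_term P Q R X Y Z a2 0 h k
       + spectral_term P Q R X Y Z a3 0 h k = (if h = k then 1 else 0)"
proof -
  have "cubic_deriv P Q a1 = (a1 - a2) * (a1 - a3)"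
    "cubic_deriv P Q a2 = (a2 - a1) * (a2 - a3)"
    "cubic_deriv P Q a3 = (a3 - a1) * (a3 - a2)"
    by (simp_all add: P_def Q_def cubic_deriv_def algebra_simps power2_eq_square)
  moreover have "a1 - a2 \<noteq> 0" "a2 - a1 \<noteq> 0" "a1 - a3 \<noteq> 0"
    "a3 - a1 \<noteq> 0" "a2 - a3 \<noteq> 0" "a3 - a2 \<noteq> 0"
    using distinct by auto
  ultimately show ?thesis
    using nat_less_3_cases[OF h] nat_less_3_cases[OF k] distinct nonzero
    by (elim disjE)
       (simp_all add: spectral_term_def right_eigenvector_def P_def R_def divide_simps,
        simp_all add: algebra_simps power2_eq_square)
qed

lemma poly_companion_mat_power_entry:
  fixes a1 a2 a3 P Q R X Y Z :: complex
  assumes f1: "a1^3 - P*a1^2 - Q*a1 - R = 0"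
    and f2: "a2^3 - P*a2^2 - Q*a2 - R = 0"
    and f3: "a3^3 - P*a3^2 - Q*a3 - R = 0"
    and distinct: "a1 \<noteq> a2" "a1 \<noteq> a3" "a2 \<noteq> a3" and R: "R \<noteq> 0"
  shows "h < 3 \<Longrightarrow> k < 3 \<Longrightarrow> (poly_companion_mat P Q R X Y Z ^\<^sub>m n) $$ (h,k) =
      spectral_term P Q R X Y Z a1 n h k + spectral_term P Q R X Y Z a2 n h k
    + spectral_term P Q R X Y Z a3 n h k"
proof (induction n arbitrary: h k)
  case 0
  note vieta = cubic_vieta[OF f1 f2 f3 distinct]
  have "a1 \<noteq> 0" "a2 \<noteq> 0" "a3 \<noteq> 0"
    using R vieta(3) by auto
  with 0 show ?case
    unfolding vieta using spectral_terms_resolve_identity[OF distinct] by simp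
next
  case (Suc n)
  let ?M = "poly_companion_mat P Q R X Y Z"
  let ?T = "spectral_term P Q R X Y Z"
  have step: "(\<Sum>l<3. ?T a n h l * ?M $$ (l,k)) = ?T a (Suc n) h k"
    if root: "a^3 - P*a^2 - Q*a - R = 0" for a
  proof -
    have "(\<Sum>l<3. ?T a n h l * ?M $$ (l,k))
        = eigenvalue_at X Y Z a ^ n * (right_eigenvector P R a h / cubic_deriv P Q a)
          * (\<Sum>l<3. a^l * ?M $$ (l,k))"
      unfolding spectral_term_def sum_distrib_left by (rule sum.cong) (simp_all add: ac_simps)
    also have "\<dots> = ?T a (Suc n) h k"
      using left_eigenvector_poly_companion_mat[OF root Suc.prems(2)]
      by (simp add: spectral_term_def)
    finally show ?thesis .
  qed
  have "(?M ^\<^sub>m Suc n) $$ (h,k) = (\<Sum>l<3. (?M ^\<^sub>m n) $$ (h,l) * ?M $$ (l,k))"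
    using Suc.prems by (simp add: scalar_prod_def lessThan_atLeast0)
  also have "\<dots> = (\<Sum>l<3. (?T a1 n h l + ?T a2 n h l + ?T a3 n h l) * ?M $$ (l,k))"
    using Suc.IH[OF Suc.prems(1)] by (intro sum.cong) auto
  also have "\<dots> = (\<Sum>l<3. ?T a1 n h l * ?M $$ (l,k)) + (\<Sum>l<3. ?T a2 n h l * ?M $$ (l,k))
                 + (\<Sum>l<3. ?T a3 n h l * ?M $$ (l,k))"
    by (simp add: distrib_right sum.distrib)
  also have "\<dots> = ?T a1 (Suc n) h k + ?T a2 (Suc n) h k + ?T a3 (Suc n) h k"
    using step[OF f1] step[OF f2] step[OF f3] by simp
  finally show ?case .
qed

lemma dominant_power_ratio_tendsto:
  fixes L l2 l3 b1 b2 b3 c1 c2 c3 :: "'a :: real_normed_field"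
  assumes "norm l2 < norm L" and "norm l3 < norm L" and "c1 \<noteq> 0"
  shows "(\<lambda>n. (L^n*b1 + l2^n*b2 + l3^n*b3) / (L^n*c1 + l2^n*c2 + l3^n*c3)) \<longlonglongrightarrow> b1/c1"
proof -
  have L: "L \<noteq> 0"
    using assms(1) by auto
  have divide_out: "(L^n*b1 + l2^n*b2 + l3^n*b3) / (L^n*c1 + l2^n*c2 + l3^n*c3)
      = (b1 + (l2/L)^n*b2 + (l3/L)^n*b3) / (c1 + (l2/L)^n*c2 + (l3/L)^n*c3)" for n
  proof -
    have Ln: "L^n \<noteq> 0"
      using L by simp
    have "L^n*b1 + l2^n*b2 + l3^n*b3 = L^n * (b1 + (l2/L)^n*b2 + (l3/L)^n*b3)"
      "L^n*c1 + l2^n*c2 + l3^n*c3 = L^n * (c1 + (l2/L)^n*c2 + (l3/L)^n*c3)"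
      using L by (simp_all add: power_divide field_simps)
    then show ?thesis
      by (simp only: mult_divide_mult_cancel_left[OF Ln])
  qed
  have vanish: "(\<lambda>n. (l2/L)^n) \<longlonglongrightarrow> 0" "(\<lambda>n. (l3/L)^n) \<longlonglongrightarrow> 0"
    using assms L by (auto intro!: LIMSEQ_power_zero simp: norm_divide divide_less_eq)
  have "(\<lambda>n. (b1 + (l2/L)^n*b2 + (l3/L)^n*b3) / (c1 + (l2/L)^n*c2 + (l3/L)^n*c3))
      \<longlonglongrightarrow> (b1 + 0*b2 + 0*b3) / (c1 + 0*c2 + 0*c3)"
    using assms(3) by (intro tendsto_intros vanish) simp
  then show ?thesis
    unfolding divide_out by simp
qed

lemma poly_companion_mat_power_entry_ratio_tendsto:
  fixes a1 a2 a3 P Q R X Y Z :: complex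
  assumes f1: "a1^3 - P*a1^2 - Q*a1 - R = 0"
    and f2: "a2^3 - P*a2^2 - Q*a2 - R = 0"
    and f3: "a3^3 - P*a3^2 - Q*a3 - R = 0"
    and distinct: "a1 \<noteq> a2" "a1 \<noteq> a3" "a2 \<noteq> a3" and R: "R \<noteq> 0" and "a1 \<noteq> P"
    and dominant: "norm (eigenvalue_at X Y Z a2) < norm (eigenvalue_at X Y Z a1)"
                  "norm (eigenvalue_at X Y Z a3) < norm (eigenvalue_at X Y Z a1)"
    and idx: "i < 3" "j < 3" "i' < 3" "j' < 3"
  shows "(\<lambda>n. (poly_companion_mat P Q R X Y Z ^\<^sub>m n) $$ (i',j')
              / (poly_companion_mat P Q R X Y Z ^\<^sub>m n) $$ (i,j))
      \<longlonglongrightarrow> (right_eigenvector P R a1 i' * a1^j') / (right_eigenvector P R a1 i * a1^j)"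
proof -
  note vieta = cubic_vieta[OF f1 f2 f3 distinct]
  have a1: "a1 \<noteq> 0"
    using R vieta(3) by auto
  have "cubic_deriv P Q a1 = (a1 - a2) * (a1 - a3)"
    unfolding vieta cubic_deriv_def by (simp add: algebra_simps power2_eq_square)
  then have deriv: "cubic_deriv P Q a1 \<noteq> 0"
    using distinct by simp
  have "right_eigenvector P R a1 i \<noteq> 0"
    using idx R a1 \<open>a1 \<noteq> P\<close> by (auto simp: right_eigenvector_def)
  then have "(\<lambda>n. (poly_companion_mat P Q R X Y Z ^\<^sub>m n) $$ (i',j')
              / (poly_companion_mat P Q R X Y Z ^\<^sub>m n) $$ (i,j))
      \<longlonglongrightarrow> (right_eigenvector P R a1 i' * a1^j' / cubic_deriv P Q a1)
          / (right_eigenvector P R a1 i * a1^j / cubic_deriv P Q a1)"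
    unfolding poly_companion_mat_power_entry[OF f1 f2 f3 distinct R idx(1,2)]
      poly_companion_mat_power_entry[OF f1 f2 f3 distinct R idx(3,4)] spectral_term_def
    using deriv a1 by (intro dominant_power_ratio_tendsto dominant) simp
  then show ?thesis
    using deriv by simp
qed

lemma Mmat_eq_poly_companion_mat:
  "Mmat p q r x y z = poly_companion_mat (of_rat p) (of_rat q) (of_rat r) (of_int x) (of_int y) (of_int z)"
  by (simp add: Mmat_def poly_companion_mat_def Let_def)


lemma Mbar_index:
  "i < 3 \<Longrightarrow> j < 3 \<Longrightarrow> Mbar p r a $$ (i,j) =
     [[a^2*(a - of_rat p)/of_rat r, a*(a - of_rat p)/of_rat r, (a - of_rat p)/of_rat r],
      [a, 1, 1/a],
      [a*(a - of_rat p), a - of_rat p, (a - of_rat p)/a]] ! i ! j"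
  by (simp add: Mbar_def Let_def mat_of_rows_list_def)

lemma Mtilde_index:
  "i < 3 \<Longrightarrow> j < 3 \<Longrightarrow> Mtilde p r a $$ (i,j) =
     [[a^3/of_rat r, a^2/of_rat r, a/of_rat r],
      [a^2/(a - of_rat p), a/(a - of_rat p), 1/(a - of_rat p)],
      [a^2, a, 1]] ! i ! j"
  by (simp add: Mtilde_def Let_def mat_of_rows_list_def)

lemma Mbar_eq_eigenvector_ratio:
  fixes a :: complex
  assumes a: "a \<noteq> 0" and a_ne_p: "a \<noteq> of_rat p" and r: "r \<noteq> 0" and idx: "i < 3" "j < 3"
  shows "Mbar p r a $$ (i,j)
    = (right_eigenvector (of_rat p) (of_rat r) a 1 * a^1) / (right_eigenvector (of_rat p) (of_rat r) a i * a^j)"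
  using nat_less_3_cases[OF idx(1)] nat_less_3_cases[OF idx(2)]
  by (elim disjE) (simp_all add: Mbar_index right_eigenvector_def field_simps a a_ne_p r power2_eq_square)

lemma Mtilde_eq_eigenvector_ratio:
  fixes a :: complex
  assumes a: "a \<noteq> 0" and a_ne_p: "a \<noteq> of_rat p" and r: "r \<noteq> 0" and idx: "i < 3" "j < 3"
  shows "Mtilde p r a $$ (i,j)
    = (right_eigenvector (of_rat p) (of_rat r) a 2 * a^2) / (right_eigenvector (of_rat p) (of_rat r) a i * a^j)"
  using nat_less_3_cases[OF idx(1)] nat_less_3_cases[OF idx(2)]
  by (elim disjE)
     (simp_all add: Mtilde_index right_eigenvector_def field_simps a a_ne_p r power2_eq_square
                    power3_eq_cube)

theorem mainTheorem4:
  fixes p q r :: rat and x y z :: int and a1 a2 a3 :: complex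
  assumes "r \<noteq> 0"
    and roots: "\<forall>a\<in>{a1, a2, a3}. a^3 - of_rat p * a^2 - of_rat q * a - of_rat r = 0"
    and distinct: "a1 \<noteq> a2" "a1 \<noteq> a3" "a2 \<noteq> a3"
    and "a1 \<noteq> of_rat p"
    and dom: "\<forall>a\<in>{a2, a3}. cmod (of_int x + of_int y * a1 + of_int z * a1^2)
                              > cmod (of_int x + of_int y * a + of_int z * a^2)"
  shows "\<forall>h\<in>{1,2,3}. \<forall>k\<in>{1,2,3}.
     (\<lambda>n. (Mmat p q r x y z ^\<^sub>m n) $$ (1, 1) / (Mmat p q r x y z ^\<^sub>m n) $$ (h - 1, k - 1))
        \<longlonglongrightarrow> Mbar p r a1 $$ (h - 1, k - 1)
   \<and> (\<lambda>n. (Mmat p q r x y z ^\<^sub>m n) $$ (2, 2) / (Mmat p q r x y z ^\<^sub>m n) $$ (h - 1, k - 1))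
        \<longlonglongrightarrow> Mtilde p r a1 $$ (h - 1, k - 1)"
proof (intro ballI conjI)
  fix h k :: nat
  assume "h \<in> {1,2,3}" "k \<in> {1,2,3}"
  then have idx: "h - 1 < 3" "k - 1 < 3"
    by auto
  have R: "(of_rat r :: complex) \<noteq> 0"
    using \<open>r \<noteq> 0\<close> by simp
  have a1: "a1 \<noteq> 0"
    using roots R by auto
  note ratio_tendsto = poly_companion_mat_power_entry_ratio_tendsto
    [of a1 "of_rat p" "of_rat q" "of_rat r" a2 a3 "of_int x" "of_int y" "of_int z", OF _ _ _ distinct R \<open>a1 \<noteq> of_rat p\<close>]
  have "norm (eigenvalue_at (of_int x) (of_int y) (of_int z) a)
      < norm (eigenvalue_at (of_int x) (of_int y) (of_int z) a1)" if "a \<in> {a2, a3}" for a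
    using dom that by (auto simp: eigenvalue_at_def)
  with roots idx have limit: "(\<lambda>n. (Mmat p q r x y z ^\<^sub>m n) $$ (i', i')
        / (Mmat p q r x y z ^\<^sub>m n) $$ (h - 1, k - 1))
      \<longlonglongrightarrow> (right_eigenvector (of_rat p) (of_rat r) a1 i' * a1^i')
          / (right_eigenvector (of_rat p) (of_rat r) a1 (h - 1) * a1^(k - 1))" if "i' < 3" for i'
    unfolding Mmat_eq_poly_companion_mat using that by (intro ratio_tendsto) auto
  show "(\<lambda>n. (Mmat p q r x y z ^\<^sub>m n) $$ (1, 1) / (Mmat p q r x y z ^\<^sub>m n) $$ (h - 1, k - 1))
          \<longlonglongrightarrow> Mbar p r a1 $$ (h - 1, k - 1)"
    unfolding Mbar_eq_eigenvector_ratio[OF a1 \<open>a1 \<noteq> of_rat p\<close> \<open>r \<noteq> 0\<close> idx]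
    using limit[of 1] by simp
  show "(\<lambda>n. (Mmat p q r x y z ^\<^sub>m n) $$ (2, 2) / (Mmat p q r x y z ^\<^sub>m n) $$ (h - 1, k - 1))
          \<longlonglongrightarrow> Mtilde p r a1 $$ (h - 1, k - 1)"
    unfolding Mtilde_eq_eigenvector_ratio[OF a1 \<open>a1 \<noteq> of_rat p\<close> \<open>r \<noteq> 0\<close> idx]
    using limit[of 2] by simp
qed

end
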